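(* Let $F$ be a field containing $\mathcal K$ and $w_1,\dots,w_N:\mathbb C\to F$ functions with $L(u)w_m(u)=0$ for all $1\le m\le N$ and $\xi(u)\ne0$ for all $u$. Then (i) for $1\le a\le N-1$ and $m\ge1$: $\xi^{(a)}_m(u)\xi^{(a)}_m(u+1)-\xi^{(a)}_{m+1}(u)\xi^{(a)}_{m-1}(u+1)-\xi^{(a+1)}_m(u)\xi^{(a-1)}_m(u+1)=0$; (ii) for $0\le a\le N$ and $m\ge0$: $\xi^{(a)}_m(u)=(-1)^{a-\frac N2+m}\,\xi^{(N-a)}_m\bigl(u+a-\frac N2\bigr)$.
   Context: Fix an integer $n\ge 2$ and put $N=2n+2$. Let $Q_a(u)$ ($1\le a\le n$, $u\in\mathbb C$) be algebraically independent commuting indeterminates, $\mathcal K$ the field of fractions of $\mathbb Z[Q_a(u)^{\pm1}]$. Put $d_a=1+\delta_{an}$, $Y_a(u)=Q_a(u-\frac{d_a}{2})/Q_a(u+\frac{d_a}{2})$ for $1\le a\le n$, $Y_0(u)=1$. For $1\le a\le n$ set $z_a(u)=\frac{Y_a(u+\frac a2)}{Y_{a-1}(u+\frac{a+1}2)}$, $z_{\bar a}(u)=\frac{Y_{a-1}(u+\frac{2n-a+3}2)}{Y_a(u+\frac{2n-a+4}2)}$; set $x_a(u)=z_a(u)$, $x_{2n+3-a}(u)=z_{\bar a}(u)$ for $1\le a\le n$, and $x_{n+1}(u)=-x_{n+2}(u)=\frac{Q_n(u+\frac n2)Q_n(u+\frac{n+4}2)}{Q_n(u+\frac{n+2}2)^2}$.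 $D$ is the shift operator ($D\,c(u)=c(u+1)D$), acting on $w:\mathbb C\to F$ by $(\sum_jc_jD^j)w(u)=\sum_jc_j(u)w(u+j)$. Define $L(u)=\prod_{i=1}^{N}(x_i(u+n+1-i)-D)$, factors ordered $i=1,\dots,N$ from left to right (a polynomial in $D$ with coefficients in $\mathcal K$). Casorati determinants: for integers $i_1,\dots,i_m$ ($m\le N$), $[i_1,\dots,i_m]$ is the function $u\mapsto\det(w_r(u+i_s))_{1\le r,s\le m}$. For $0\le a\le N$ and $m\ge0$ let $\xi^{(a)}_m(u)=[0,1,\dots,a-1,a+m,a+m+1,\dots,N+m-1]$ (an $N\times N$ Casorati determinant), and $\xi(u)=[0,1,\dots,N-1]$. *)

theory Defs
  imports Complex_Main "Jordan_Normal_Form.Determinant"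
begin

(* Rank n of the algebra; N = 2n+2. Q a u are the indeterminates Q_a(u), valued in the field F. *)

definition dd :: "nat \<Rightarrow> nat \<Rightarrow> complex" where
  "dd n a = (if a = n then 2 else 1)"

definition Yf :: "nat \<Rightarrow> (nat \<Rightarrow> complex \<Rightarrow> 'F::field) \<Rightarrow> nat \<Rightarrow> complex \<Rightarrow> 'F" where
  "Yf n Q a u = (if a = 0 then 1 else Q a (u - dd n a / 2) / Q a (u + dd n a / 2))"

definition zf :: "nat \<Rightarrow> (nat \<Rightarrow> complex \<Rightarrow> 'F::field) \<Rightarrow> nat \<Rightarrow> complex \<Rightarrow> 'F" where
  "zf n Q a u = Yf n Q a (u + of_nat a / 2) / Yf n Q (a - 1) (u + (of_nat a + 1) / 2)"

definition zbarf :: "nat \<Rightarrow> (nat \<Rightarrow> complex \<Rightarrow> 'F::field) \<Rightarrow> nat \<Rightarrow> complex \<Rightarrow> 'F" where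
  "zbarf n Q a u = Yf n Q (a - 1) (u + (2 * of_nat n - of_nat a + 3) / 2)
                   / Yf n Q a (u + (2 * of_nat n - of_nat a + 4) / 2)"

definition xmid :: "nat \<Rightarrow> (nat \<Rightarrow> complex \<Rightarrow> 'F::field) \<Rightarrow> complex \<Rightarrow> 'F" where
  "xmid n Q u = Q n (u + of_nat n / 2) * Q n (u + (of_nat n + 4) / 2) / (Q n (u + (of_nat n + 2) / 2))^2"

definition xf :: "nat \<Rightarrow> (nat \<Rightarrow> complex \<Rightarrow> 'F::field) \<Rightarrow> nat \<Rightarrow> complex \<Rightarrow> 'F" where
  "xf n Q i u =
     (if 1 \<le> i \<and> i \<le> n then zf n Q i u
      else if i = n + 1 then xmid n Q u
      else if i = n + 2 then - xmid n Q u
      else if n + 3 \<le> i \<and> i \<le> 2 * n + 2 then zbarf n Q (2 * n + 3 - i) u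
      else 0)"

definition Lfactor :: "nat \<Rightarrow> (nat \<Rightarrow> complex \<Rightarrow> 'F::field) \<Rightarrow> nat \<Rightarrow> (complex \<Rightarrow> 'F) \<Rightarrow> complex \<Rightarrow> 'F" where
  "Lfactor n Q i g u = xf n Q i (u + of_nat n + 1 - of_nat i) * g u - g (u + 1)"

(* L(u) = prod_{i=1}^{N} (x_i(u+n+1-i) - D), factors left to right, acting on g *)
definition Lop :: "nat \<Rightarrow> (nat \<Rightarrow> complex \<Rightarrow> 'F::field) \<Rightarrow> (complex \<Rightarrow> 'F) \<Rightarrow> complex \<Rightarrow> 'F" where
  "Lop n Q g = foldr (Lfactor n Q) [1..<2 * n + 3] g"

(* Casorati determinant [idx 0, ..., idx (m-1)] of w_1, ..., w_m *)
definition casorati :: "(nat \<Rightarrow> complex \<Rightarrow> 'F::field) \<Rightarrow> nat \<Rightarrow> (nat \<Rightarrow> int) \<Rightarrow> complex \<Rightarrow> 'F" where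
  "casorati w m idx u = det (mat m m (\<lambda>(r, s). w (r + 1) (u + of_int (idx s))))"

(* xi^(a)_m(u) = [0,...,a-1,a+m,...,N+m-1] *)
definition xi_am :: "(nat \<Rightarrow> complex \<Rightarrow> 'F::field) \<Rightarrow> nat \<Rightarrow> nat \<Rightarrow> nat \<Rightarrow> complex \<Rightarrow> 'F" where
  "xi_am w N a m u = casorati w N (\<lambda>s. if s < a then int s else int (s + m)) u"

definition xi0 :: "(nat \<Rightarrow> complex \<Rightarrow> 'F::field) \<Rightarrow> nat \<Rightarrow> complex \<Rightarrow> 'F" where
  "xi0 w N u = casorati w N (\<lambda>s. int s) u"

(* The elements Q a u (1 <= a <= n, u complex) of F are algebraically independent over Z,
   i.e. Z[Q_a(u)^{+-1}] (hence its fraction field K) embeds in F via Q_a(u) |-> Q a u. *)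
definition alg_indep :: "nat \<Rightarrow> (nat \<Rightarrow> complex \<Rightarrow> 'F::field) \<Rightarrow> bool" where
  "alg_indep n Q \<longleftrightarrow>
    (\<forall>(S :: ((nat \<times> complex) \<Rightarrow> nat) set) (c :: ((nat \<times> complex) \<Rightarrow> nat) \<Rightarrow> int).
       finite S
       \<and> (\<forall>e\<in>S. finite {p. e p \<noteq> 0} \<and> (\<forall>p. e p \<noteq> 0 \<longrightarrow> fst p \<in> {1..n}))
       \<and> (\<Sum>e\<in>S. of_int (c e) * (\<Prod>p\<in>{p. e p \<noteq> 0}. Q (fst p) (snd p) ^ e p)) = 0
       \<longrightarrow> (\<forall>e\<in>S. c e = 0))"

end

theory Submission
  imports Defs
begin

(* Part (i) is a three-term Pluecker relation: the six Casorati determinants involved share the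
   N - 2 columns 1, ..., a-1, a+m+1, ..., N+m-1 and differ only in two of the four columns
   0, a, a+m, N+m.

   For part (ii), bordering the Casorati matrix by unit rows and multiplying it by a unitriangular
   matrix built from the coefficients c_t(u) of L = sum_t c_t(u) D^t turns every shifted solution
   column into zero, so that xi^(a)_m(u) = +- xi(u) det (c_(a+i-k)(u+k))_(i,k<m).
   The factors x_a and x_(N+1-a) of L pair up so that, peeling them off from the outside in,
   the coefficients satisfy c_j(v) = - c_(N-j)(v + j - N/2); hence the determinant for a is
   (-1)^m times the transposed determinant for N - a at the shifted point, and c_0 = -1 gives
   xi(u+1) = - xi(u). *)

section \<open>Difference operators\<close>

(* diff_op [X_1, ..., X_k] g = (X_1 - D) ... (X_k - D) g for the shift D g(u) = g(u + 1), and
   diff_op_coeff Xs t u is the coefficient of D^t in this operator at u. *)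
fun diff_op_coeff :: "('a::ring_1 \<Rightarrow> 'F::comm_ring_1) list \<Rightarrow> int \<Rightarrow> 'a \<Rightarrow> 'F" where
  "diff_op_coeff [] t u = (if t = 0 then 1 else 0)"
| "diff_op_coeff (X # Xs) t u = X u * diff_op_coeff Xs t u - diff_op_coeff Xs (t - 1) (u + 1)"

definition diff_op :: "('a::ring_1 \<Rightarrow> 'F::comm_ring_1) list \<Rightarrow> ('a \<Rightarrow> 'F) \<Rightarrow> 'a \<Rightarrow> 'F" where
  "diff_op Xs g = foldr (\<lambda>X h u. X u * h u - h (u + 1)) Xs g"

lemma diff_op_Cons: "diff_op (X # Xs) g u = X u * diff_op Xs g u - diff_op Xs g (u + 1)"
  by (simp add: diff_op_def)

lemma diff_op_coeff_eq_0: "t < 0 \<or> int (length Xs) < t \<Longrightarrow> diff_op_coeff Xs t u = 0"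
  by (induction Xs arbitrary: t u) auto

lemma diff_op_coeff_length: "diff_op_coeff Xs (int (length Xs)) u = (-1) ^ length Xs"
  by (induction Xs arbitrary: u) (auto simp: diff_op_coeff_eq_0)

lemma diff_op_coeff_snoc:
  "diff_op_coeff (Xs @ [X]) t u = diff_op_coeff Xs t u * X (u + of_int t) - diff_op_coeff Xs (t - 1) u"
proof (induction Xs arbitrary: t u)
  case (Cons Y Xs)
  have "u + 1 + of_int (t - 1) = u + of_int t"
    by simp
  then show ?case
    by (simp only: Cons append_Cons diff_op_coeff.simps) (simp add: algebra_simps)
qed simp

lemma diff_op_coeff_wrap:
  "diff_op_coeff (X # K @ [X']) t u
     = X u * diff_op_coeff K t u * X' (u + of_int t) - X u * diff_op_coeff K (t - 1) u
       - diff_op_coeff K (t - 1) (u + 1) * X' (u + of_int t) + diff_op_coeff K (t - 2) (u + 1)"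
  by (simp add: diff_op_coeff_snoc algebra_simps)

lemma diff_op_eq_sum:
  "diff_op Xs g u = (\<Sum>t\<le>length Xs. diff_op_coeff Xs (int t) u * g (u + of_nat t))"
proof (induction Xs arbitrary: u)
  case Nil
  then show ?case by (simp add: diff_op_def)
next
  case (Cons X Xs)
  have shifted: "diff_op Xs g (u + 1)
      = (\<Sum>t\<le>Suc (length Xs). diff_op_coeff Xs (int t - 1) (u + 1) * g (u + of_nat t))"
    by (subst sum.atMost_Suc_shift) (simp add: Cons diff_op_coeff_eq_0 algebra_simps)
  have "X u * diff_op Xs g u
      = (\<Sum>t\<le>Suc (length Xs). X u * diff_op_coeff Xs (int t) u * g (u + of_nat t))"
    by (simp add: Cons diff_op_coeff_eq_0 sum_distrib_left mult.assoc)
  then show ?case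
    by (simp add: diff_op_Cons shifted sum_subtractf[symmetric] left_diff_distrib)
qed

section \<open>Column determinants and the Pluecker relation\<close>

definition coldet :: "(nat \<Rightarrow> 'a::comm_ring_1) list \<Rightarrow> 'a" where
  "coldet vs = det (mat (length vs) (length vs) (\<lambda>(i, j). (vs ! j) i))"

lemma coldet_swap: "coldet (xs @ y # z # zs) = - coldet (xs @ z # y # zs)"
proof -
  let ?n = "length (xs @ z # y # zs)" and ?k = "length xs"
  have "mat ?n ?n (\<lambda>(i, j). ((xs @ y # z # zs) ! j) i)
      = swapcols ?k (Suc ?k) (mat ?n ?n (\<lambda>(i, j). ((xs @ z # y # zs) ! j) i))"
    by (rule eq_matI) (auto simp: nth_append nth_Cons split: nat.split)
  then show ?thesis
    using det_swapcols[of ?k ?n "Suc ?k" "mat ?n ?n (\<lambda>(i, j). ((xs @ z # y # zs) ! j) i)"]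
    by (simp add: coldet_def)
qed

lemma coldet_move: "coldet (xs @ ys @ z # zs) = (-1) ^ length ys * coldet (xs @ z # ys @ zs)"
proof (induction ys arbitrary: xs)
  case (Cons y ys)
  have "coldet (xs @ (y # ys) @ z # zs) = (-1) ^ length ys * coldet ((xs @ [y]) @ z # ys @ zs)"
    using Cons.IH[of "xs @ [y]"] by simp
  also have "coldet ((xs @ [y]) @ z # ys @ zs) = - coldet (xs @ z # y # ys @ zs)"
    using coldet_swap[of xs y z "ys @ zs"] by simp
  finally show ?case
    by simp
qed simp

lemma coldet_eq_0:
  assumes "i < j" and "j < length vs" and "vs ! i = vs ! j"
  shows "coldet vs = 0"
  unfolding coldet_def using assms
  by (intro det_identical_columns[of _ "length vs" i j]) auto

lemma coldet_linear_second: "\<exists>\<phi>. \<forall>y. coldet (x # y # zs) = (\<Sum>i<length zs + 2. y i * \<phi> i)"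
proof -
  let ?n = "length zs + 2"
  let ?M = "\<lambda>y. mat ?n ?n (\<lambda>(i, j). ((x # y # zs) ! j) i)"
  have "coldet (x # y # zs) = (\<Sum>i<?n. y i * cofactor (?M (\<lambda>_. 0)) i 1)" for y
  proof -
    have len: "length (x # y # zs) = ?n"
      by simp
    have "coldet (x # y # zs) = (\<Sum>i<?n. ?M y $$ (i, 1) * cofactor (?M y) i 1)"
      unfolding coldet_def len by (intro laplace_expansion_column) auto
    moreover have "mat_delete (?M y) i 1 = mat_delete (?M (\<lambda>_. 0)) i 1" for i
      by (rule eq_matI) (auto simp: mat_delete_def nth_Cons split: nat.split)
    ultimately show ?thesis
      by (simp add: cofactor_def)
  qed
  then show ?thesis
    by (intro exI[where x = "\<lambda>i. cofactor (?M (\<lambda>_. 0)) i 1"]) simp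
qed

lemma left_null_vector_eq_0:
  fixes A :: "'a::field mat"
  assumes A: "A \<in> carrier_mat n n" and "det A \<noteq> 0"
    and null: "\<And>k. k < n \<Longrightarrow> (\<Sum>i<n. \<phi> i * A $$ (i, k)) = 0" and "i < n"
  shows "\<phi> i = 0"
proof -
  have "transpose_mat A *\<^sub>v vec n \<phi> = 0\<^sub>v n"
    using A null by (intro eq_vecI) (auto simp: scalar_prod_def lessThan_atLeast0 mult.commute)
  moreover have "transpose_mat A \<in> carrier_mat n n" and "det (transpose_mat A) \<noteq> 0"
    using A assms(2) det_transpose[OF A] by simp_all
  ultimately have "vec n \<phi> = 0\<^sub>v n"
    using det_0_iff_vec_prod_zero_field[of "transpose_mat A" n] vec_carrier[of n \<phi>] by blast
  then show ?thesis
    using assms(4) by (metis index_vec index_zero_vec(1))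
qed

lemma coldet_nonzero_span:
  fixes vs :: "(nat \<Rightarrow> 'a::field) list"
  assumes "coldet vs \<noteq> 0" and "\<And>v. v \<in> set vs \<Longrightarrow> (\<Sum>i<length vs. v i * \<phi> i) = 0"
  shows "(\<Sum>i<length vs. s i * \<phi> i) = 0"
proof -
  let ?n = "length vs"
  have "\<phi> i = 0" if "i < ?n" for i
  proof (rule left_null_vector_eq_0[of "mat ?n ?n (\<lambda>(i, j). (vs ! j) i)" ?n])
    show "det (mat ?n ?n (\<lambda>(i, j). (vs ! j) i)) \<noteq> 0"
      using assms(1) by (simp add: coldet_def)
    fix k
    assume "k < ?n"
    then show "(\<Sum>i<?n. \<phi> i * mat ?n ?n (\<lambda>(i, j). (vs ! j) i) $$ (i, k)) = 0"
      using assms(2)[of "vs ! k"] by (simp add: mult.commute)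
  qed (use that in simp_all)
  then show ?thesis
    by simp
qed

lemma coldet_plucker_linear:
  fixes p q r :: "nat \<Rightarrow> 'a::field"
  shows "\<exists>\<phi>. \<forall>z. coldet (p # r # zs) * coldet (q # z # zs) - coldet (p # q # zs) * coldet (r # z # zs)
                 - coldet (p # z # zs) * coldet (q # r # zs) = (\<Sum>i<length zs + 2. z i * \<phi> i)"
proof -
  let ?n = "length zs + 2"
  obtain \<phi>p \<phi>q \<phi>r where lin: "\<And>y. coldet (p # y # zs) = (\<Sum>i<?n. y i * \<phi>p i)"
    "\<And>y. coldet (q # y # zs) = (\<Sum>i<?n. y i * \<phi>q i)" "\<And>y. coldet (r # y # zs) = (\<Sum>i<?n. y i * \<phi>r i)"
    using coldet_linear_second[of p zs] coldet_linear_second[of q zs] coldet_linear_second[of r zs]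
    by blast
  define \<phi> where "\<phi> i = coldet (p # r # zs) * \<phi>q i - coldet (p # q # zs) * \<phi>r i - coldet (q # r # zs) * \<phi>p i"
    for i
  have "coldet (p # r # zs) * coldet (q # z # zs) - coldet (p # q # zs) * coldet (r # z # zs)
      - coldet (p # z # zs) * coldet (q # r # zs) = (\<Sum>i<?n. z i * \<phi> i)" for z
  proof -
    have "(\<Sum>i<?n. z i * \<phi> i) = (\<Sum>i<?n. coldet (p # r # zs) * (z i * \<phi>q i)
        - coldet (p # q # zs) * (z i * \<phi>r i) - z i * \<phi>p i * coldet (q # r # zs))"
      by (rule sum.cong) (simp_all add: \<phi>_def algebra_simps)
    then show ?thesis
      unfolding lin(1)[of z] lin(2)[of z] lin(3)[of z]
      by (simp only: sum_subtractf sum_distrib_left sum_distrib_right)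
  qed
  then show ?thesis
    by blast
qed

lemma coldet_plucker:
  fixes p q r s :: "nat \<Rightarrow> 'a::field"
  shows "coldet (p # r # zs) * coldet (q # s # zs) - coldet (p # q # zs) * coldet (r # s # zs)
       - coldet (p # s # zs) * coldet (q # r # zs) = 0"
proof -
  define B where "B x y = coldet (x # y # zs)" for x y
  define f where "f z = B p r * B q z - B p q * B r z - B p z * B q r" for z
  obtain \<phi> where f_lin: "\<And>z. f z = (\<Sum>i<length zs + 2. z i * \<phi> i)"
    using coldet_plucker_linear[of p r zs q] unfolding f_def B_def by blast
  have B_swap: "B y x = - B x y" for x y
    using coldet_swap[of "[]" y x zs] by (simp add: B_def)
  have B_same: "B x x = 0" for x
    unfolding B_def by (rule coldet_eq_0[of 0 1]) simp_all
  have f_zero: "f z = 0" if "z \<in> {p, q, r} \<union> set zs" for z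
  proof -
    have "f p = 0" "f q = 0" "f r = 0"
      unfolding f_def B_swap[of p q] B_swap[of p r] B_swap[of q r] B_same by (simp_all add: algebra_simps)
    moreover have "f z = 0" if "z \<in> set zs"
    proof -
      obtain k where "k < length zs" "zs ! k = z"
        using \<open>z \<in> set zs\<close> by (auto simp: in_set_conv_nth)
      then have "B x z = 0" for x
        unfolding B_def by (intro coldet_eq_0[of 1 "k + 2"]) simp_all
      then show ?thesis
        by (simp add: f_def)
    qed
    ultimately show ?thesis
      using that by blast
  qed
  \<comment> \<open>The linear functional f vanishes on p, q, r and zs, which span everything
      unless B p q, B p r and B q r all vanish.\<close>
  have f_s: "f s = 0" if "x \<in> {p, q, r}" "y \<in> {p, q, r}" "B x y \<noteq> 0" for x y
  proof -
    have "(\<Sum>i<length (x # y # zs). v i * \<phi> i) = 0" if "v \<in> set (x # y # zs)" for v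
      using f_zero[of v] that \<open>x \<in> {p, q, r}\<close> \<open>y \<in> {p, q, r}\<close> by (auto simp: f_lin)
    moreover have "coldet (x # y # zs) \<noteq> 0"
      using \<open>B x y \<noteq> 0\<close> by (simp add: B_def)
    ultimately show ?thesis
      using coldet_nonzero_span[of "x # y # zs" \<phi> s] by (simp add: f_lin)
  qed
  have "f s = 0"
    using f_s by (cases "B p q = 0 \<and> B p r = 0 \<and> B q r = 0") (auto simp: f_def)
  then show ?thesis
    by (simp add: f_def B_def)
qed

section \<open>Casorati determinants\<close>

definition casorati_col :: "(nat \<Rightarrow> complex \<Rightarrow> 'F) \<Rightarrow> complex \<Rightarrow> nat \<Rightarrow> nat \<Rightarrow> 'F" where
  "casorati_col w u k r = w (r + 1) (u + of_nat k)"

lemma xi_am_eq_coldet: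
  assumes "b \<le> N"
  shows "xi_am w N b k (u + of_nat d)
       = coldet (map (casorati_col w u) ([d..<b + d] @ [b + k + d..<N + k + d]))"
    (is "_ = coldet (map _ ?ks)")
proof -
  define ks where "ks = ?ks"
  have "length ks = N"
    using assms by (simp add: ks_def)
  moreover have "ks ! j = (if j < b then j + d else j + k + d)" if "j < N" for j
    using that assms by (simp add: ks_def nth_append)
  ultimately show ?thesis
    unfolding xi_am_def casorati_def coldet_def casorati_col_def length_map ks_def[symmetric]
    by (intro arg_cong[where f = det] eq_matI) (auto simp: algebra_simps)
qed

lemma casorati_plucker:
  fixes w :: "nat \<Rightarrow> complex \<Rightarrow> 'F::field"
  assumes "1 \<le> a" and "a < N" and "1 \<le> m"
  shows "xi_am w N a m u * xi_am w N a m (u + 1) - xi_am w N a (m + 1) u * xi_am w N a (m - 1) (u + 1)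
       - xi_am w N (a + 1) m u * xi_am w N (a - 1) m (u + 1) = 0"
proof -
  define V where "V = casorati_col w u"
  define xs where "xs = map V [1..<a]"
  define ys where "ys = map V [a + m + 1..<N + m]"
  let ?P = "\<lambda>x y. coldet (x # y # xs @ ys)" and ?sx = "(-1 :: 'F) ^ length xs"
    and ?sy = "(-1 :: 'F) ^ length ys"
  have xi: "xi_am w N b k u = coldet (map V ([0..<b] @ [b + k..<N + k]))"
    and xi_Suc: "xi_am w N b k (u + 1) = coldet (map V ([1..<b + 1] @ [b + k + 1..<N + k + 1]))"
    if "b \<le> N" for b k
    using xi_am_eq_coldet[OF that, of w k u 0] xi_am_eq_coldet[OF that, of w k u 1]
    by (simp_all add: V_def)
  have front: "coldet (xs @ z # zs) = ?sx * coldet (z # xs @ zs)" for z zs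
    using coldet_move[of "[]" xs z zs] by simp
  have second: "coldet (x # zs' @ z # zs) = (-1) ^ length zs' * coldet (x # z # zs' @ zs)"
    for x z :: "nat \<Rightarrow> 'F" and zs' zs
    using coldet_move[of "[x]" zs' z zs] by simp
  have move_last: "coldet (x # xs @ ys @ [z]) = ?sx * ?sy * ?P x z" for x z
    using second[of x "xs @ ys" z "[]"] by (simp add: power_add)
  have "map V ([0..<a] @ [a + m..<N + m]) = V 0 # xs @ V (a + m) # ys"
    and "map V ([1..<a + 1] @ [a + m + 1..<N + m + 1]) = xs @ V a # ys @ [V (N + m)]"
    and "map V ([0..<a] @ [a + (m + 1)..<N + (m + 1)]) = V 0 # xs @ ys @ [V (N + m)]"
    and "map V ([1..<a + 1] @ [a + (m - 1) + 1..<N + (m - 1) + 1]) = xs @ V a # V (a + m) # ys"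
    and "map V ([0..<a + 1] @ [a + 1 + m..<N + m]) = V 0 # xs @ V a # ys"
    and "map V ([1..<a - 1 + 1] @ [a - 1 + m + 1..<N + m + 1]) = xs @ V (a + m) # ys @ [V (N + m)]"
    using assms by (simp_all add: xs_def ys_def upt_conv_Cons)
  then have "xi_am w N a m u = ?sx * ?P (V 0) (V (a + m))"
    and "xi_am w N a m (u + 1) = ?sy * ?P (V a) (V (N + m))"
    and "xi_am w N a (m + 1) u = ?sx * ?sy * ?P (V 0) (V (N + m))"
    and "xi_am w N a (m - 1) (u + 1) = ?P (V a) (V (a + m))"
    and "xi_am w N (a + 1) m u = ?sx * ?P (V 0) (V a)"
    and "xi_am w N (a - 1) m (u + 1) = ?sy * ?P (V (a + m)) (V (N + m))"
    using assms by (simp_all only: xi xi_Suc less_imp_le Suc_leI Suc_eq_plus1 diff_le_self)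
      (simp_all add: front second move_last)
  then show ?thesis
    using coldet_plucker[of "V 0" "V (a + m)" "xs @ ys" "V a" "V (N + m)"]
    by (simp add: algebra_simps)
qed

(* Rows r < N: the Casorati matrix with columns 0, ..., a+j-1, a+m, ..., N+m-1; row N+i: the unit
   vector e_(a+i).  For j = 0 this is xi^(a)_m, for j = m all columns 0, ..., N+m-1 are present. *)
definition bordered_casorati :: "(nat \<Rightarrow> complex \<Rightarrow> 'F::field) \<Rightarrow> nat \<Rightarrow> nat \<Rightarrow> nat \<Rightarrow> complex \<Rightarrow> nat \<Rightarrow> 'F mat" where
  "bordered_casorati w N a m u j = mat (N + j) (N + j) (\<lambda>(r, c).
     if r < N then w (r + 1) (u + of_nat (if c < a + j then c else c + (m - j)))
     else if c = a + (r - N) then 1 else 0)"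

lemma bordered_casorati_carrier: "bordered_casorati w N a m u j \<in> carrier_mat (N + j) (N + j)"
  by (simp add: bordered_casorati_def)

lemma bordered_casorati_full:
  "bordered_casorati w N a m u m = mat (N + m) (N + m) (\<lambda>(r, c).
     if r < N then w (r + 1) (u + of_nat c) else if c = a + (r - N) then 1 else 0)"
  by (rule eq_matI) (auto simp: bordered_casorati_def)

lemma bordered_casorati_0: "det (bordered_casorati w N a m u 0) = xi_am w N a m u"
proof -
  have "bordered_casorati w N a m u 0
      = mat N N (\<lambda>(r, s). w (r + 1) (u + of_int (if s < a then int s else int (s + m))))"
    by (rule eq_matI) (auto simp: bordered_casorati_def)
  then show ?thesis
    by (simp add: xi_am_def casorati_def)
qed

lemma det_bordered_casorati_Suc:
  fixes w :: "nat \<Rightarrow> complex \<Rightarrow> 'F::field"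
  assumes "j < m" and "a \<le> N"
  shows "det (bordered_casorati w N a m u (Suc j)) = (-1) ^ (N + a) * det (bordered_casorati w N a m u j)"
proof -
  let ?A = "bordered_casorati w N a m u (Suc j)"
  have "det ?A = (\<Sum>c<N + Suc j. ?A $$ (N + j, c) * cofactor ?A (N + j) c)"
    by (rule laplace_expansion_row[OF bordered_casorati_carrier]) simp
  also have "\<dots> = (\<Sum>c<N + Suc j. if c = a + j then cofactor ?A (N + j) c else 0)"
    by (rule sum.cong) (auto simp: bordered_casorati_def)
  also have "\<dots> = (-1) ^ (N + j + (a + j)) * det (mat_delete ?A (N + j) (a + j))"
    using assms(2) by (simp add: cofactor_def)
  also have "mat_delete ?A (N + j) (a + j) = bordered_casorati w N a m u j"
    using assms(1) by (intro eq_matI) (auto simp: bordered_casorati_def mat_delete_def algebra_simps)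
  also have "(-1 :: 'F) ^ (N + j + (a + j)) = (-1) ^ (N + a)"
    by (simp add: power_add power_mult_distrib flip: mult_2)
  finally show ?thesis .
qed

lemma det_bordered_casorati:
  fixes w :: "nat \<Rightarrow> complex \<Rightarrow> 'F::field"
  assumes "a \<le> N"
  shows "j \<le> m \<Longrightarrow> det (bordered_casorati w N a m u j) = (-1) ^ ((N + a) * j) * xi_am w N a m u"
  by (induction j) (simp_all add: bordered_casorati_0 det_bordered_casorati_Suc[OF _ assms] power_add power_mult)

(* Right multiplication by this unitriangular matrix (its diagonal carries the top coefficient
   (-1)^N = 1 of L) replaces column N+k of the full Casorati matrix by the column (L w_r)(u+k). *)
definition coeff_transfer_mat :: "(complex \<Rightarrow> 'F::field) list \<Rightarrow> nat \<Rightarrow> nat \<Rightarrow> complex \<Rightarrow> 'F mat" where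
  "coeff_transfer_mat L N m u = mat (N + m) (N + m) (\<lambda>(p, c).
     if c < N then (if p = c then 1 else 0) else diff_op_coeff L (int p - int (c - N)) (u + of_nat (c - N)))"

lemma det_coeff_transfer_mat:
  assumes "length L = N" and "even N"
  shows "det (coeff_transfer_mat L N m u) = 1"
proof -
  have triangular: "upper_triangular (coeff_transfer_mat L N m u)"
    using assms(1) by (auto simp: upper_triangular_def coeff_transfer_mat_def diff_op_coeff_eq_0)
  have diagonal: "diag_mat (coeff_transfer_mat L N m u) = replicate (N + m) 1"
  proof (rule nth_equalityI)
    fix i
    assume "i < length (diag_mat (coeff_transfer_mat L N m u))"
    moreover have "int i - int (i - N) = int (length L)" if "\<not> i < N"
      using that assms(1) by simp
    ultimately show "diag_mat (coeff_transfer_mat L N m u) ! i = replicate (N + m) 1 ! i"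
      using diff_op_coeff_length[of L] assms
      by (auto simp: diag_mat_def coeff_transfer_mat_def)
  qed (simp add: diag_mat_def coeff_transfer_mat_def)
  have "coeff_transfer_mat L N m u \<in> carrier_mat (N + m) (N + m)"
    by (simp add: coeff_transfer_mat_def)
  then show ?thesis
    using det_upper_triangular[OF triangular] by (simp add: diagonal)
qed

lemma index_mult_mat_mat:
  "i < nr \<Longrightarrow> j < nc \<Longrightarrow> (mat nr n f * mat n nc g) $$ (i, j) = (\<Sum>p<n. f (i, p) * g (p, j))"
  by (simp add: scalar_prod_def lessThan_atLeast0)

lemma sum_diff_op_coeff_window:
  assumes "length L = N" and "k < m"
  shows "(\<Sum>p<N + m. g (u + of_nat p) * diff_op_coeff L (int p - int k) (u + of_nat k))
       = diff_op L g (u + of_nat k)"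
proof -
  let ?F = "\<lambda>p. g (u + of_nat p) * diff_op_coeff L (int p - int k) (u + of_nat k)"
  have "(\<Sum>p<N + m. ?F p) = (\<Sum>p\<in>{k..N + k}. ?F p)"
    using assms by (intro sum.mono_neutral_right) (auto simp: diff_op_coeff_eq_0)
  also have "\<dots> = (\<Sum>t\<in>{0..N}. ?F (t + k))"
    using sum.shift_bounds_cl_nat_ivl[of ?F 0 k N] by simp
  also have "\<dots> = diff_op L g (u + of_nat k)"
    unfolding diff_op_eq_sum assms(1) atLeast0AtMost by (rule sum.cong) (simp_all add: algebra_simps)
  finally show ?thesis .
qed

lemma index_bordered_casorati_mult:
  assumes "r < N + m" and "c < N + m"
  shows "(bordered_casorati w N a m u m * coeff_transfer_mat L N m u) $$ (r, c) = (\<Sum>p<N + m.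
      (if r < N then w (r + 1) (u + of_nat p) else if p = a + (r - N) then 1 else 0) *
      (if c < N then (if p = c then 1 else 0) else diff_op_coeff L (int p - int (c - N)) (u + of_nat (c - N))))"
  unfolding bordered_casorati_full coeff_transfer_mat_def by (subst index_mult_mat_mat[OF assms]) simp

lemma bordered_casorati_mult_coeff_transfer_mat:
  assumes "length L = N" and "a \<le> N"
    and sol: "\<And>r v. r < N \<Longrightarrow> diff_op L (w (r + 1)) v = 0"
  shows "bordered_casorati w N a m u m * coeff_transfer_mat L N m u = four_block_mat
     (mat N N (\<lambda>(r, c). w (r + 1) (u + of_nat c))) (0\<^sub>m N m)
     (mat m N (\<lambda>(i, c). if c = a + i then 1 else 0))
     (mat m m (\<lambda>(i, k). diff_op_coeff L (int a + int i - int k) (u + of_nat k)))"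
    (is "?Z * ?P = ?B")
proof (rule eq_matI)
  fix r c
  assume "r < dim_row ?B" and "c < dim_col ?B"
  then have r: "r < N + m" and c: "c < N + m"
    by auto
  note entry = index_bordered_casorati_mult[OF r c]
  consider "r < N" "c < N" | "r < N" "\<not> c < N" | "\<not> r < N"
    by blast
  then show "(?Z * ?P) $$ (r, c) = ?B $$ (r, c)"
  proof cases
    case 1
    then have "(?Z * ?P) $$ (r, c) = (\<Sum>p<N + m. if p = c then w (r + 1) (u + of_nat c) else 0)"
      unfolding entry by (intro sum.cong) auto
    then show ?thesis
      using 1 c by simp
  next
    case 2
    then have "(?Z * ?P) $$ (r, c)
        = (\<Sum>p<N + m. w (r + 1) (u + of_nat p) * diff_op_coeff L (int p - int (c - N)) (u + of_nat (c - N)))"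
      unfolding entry by simp
    also have "\<dots> = diff_op L (w (r + 1)) (u + of_nat (c - N))"
      by (rule sum_diff_op_coeff_window[OF assms(1)]) (use 2 c in simp)
    finally show ?thesis
      using 2 c sol by simp
  next
    case 3
    have ai: "a + (r - N) < N + m"
      using 3 r assms(2) by simp
    have "(?Z * ?P) $$ (r, c) = (\<Sum>p<N + m. if p = a + (r - N) then
        (if c < N then (if p = c then 1 else 0) else diff_op_coeff L (int p - int (c - N)) (u + of_nat (c - N)))
        else 0)"
      unfolding entry using 3 by (intro sum.cong) auto
    also have "\<dots> = (if c < N then (if a + (r - N) = c then 1 else 0)
        else diff_op_coeff L (int (a + (r - N)) - int (c - N)) (u + of_nat (c - N)))"
      using ai by simp
    finally show ?thesis
      using 3 r c by (auto simp: algebra_simps)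
  qed
qed (auto simp: bordered_casorati_def coeff_transfer_mat_def)

lemma xi_am_eq_det_coeffs:
  fixes w :: "nat \<Rightarrow> complex \<Rightarrow> 'F::field"
  assumes "length L = N" and "even N" and "a \<le> N"
    and "\<And>r v. r < N \<Longrightarrow> diff_op L (w (r + 1)) v = 0"
  shows "xi_am w N a m u
       = (-1) ^ (a * m) * xi0 w N u * det (mat m m (\<lambda>(i, k). diff_op_coeff L (int a + int i - int k) (u + of_nat k)))"
    (is "_ = _ * _ * det ?C")
proof -
  have "(-1::'F) ^ ((N + a) * m) = (-1) ^ (a * m)"
    using assms(2) by (simp add: distrib_right power_add power_mult)
  then have "(-1) ^ (a * m) * xi_am w N a m u = det (bordered_casorati w N a m u m)"
    using det_bordered_casorati[OF assms(3) order_refl, of w m u] by simp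
  also have "\<dots> = det (bordered_casorati w N a m u m * coeff_transfer_mat L N m u)"
  proof -
    have "det (bordered_casorati w N a m u m * coeff_transfer_mat L N m u)
        = det (bordered_casorati w N a m u m) * det (coeff_transfer_mat L N m u)"
      by (rule det_mult[OF bordered_casorati_carrier]) (simp add: coeff_transfer_mat_def)
    then show ?thesis
      by (simp add: det_coeff_transfer_mat[OF assms(1,2)])
  qed
  also have "\<dots> = xi0 w N u * det ?C"
    using assms
    by (subst bordered_casorati_mult_coeff_transfer_mat[of L N a w m u], simp_all,
        subst det_four_block_mat_upper_right_zero) (auto simp: xi0_def casorati_def)
  finally have "(-1) ^ (a * m) * ((-1) ^ (a * m) * xi_am w N a m u) = (-1) ^ (a * m) * (xi0 w N u * det ?C)"
    by (rule arg_cong)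
  then show ?thesis
    by (simp add: mult.assoc)
qed

section \<open>Symmetry of the coefficients of L\<close>

definition twisted_antipalindromic :: "(int \<Rightarrow> 'a::ring_1 \<Rightarrow> 'F::field) \<Rightarrow> int \<Rightarrow> ('a \<Rightarrow> 'F) \<Rightarrow> bool" where
  "twisted_antipalindromic c s f \<longleftrightarrow>
     (\<forall>j v. c j v = - (f v / f (v + of_int (j - s))) * c (2 * s - j) (v + of_int (j - s)))"

lemma twisted_antipalindromic_wrap:
  fixes K :: "('a::ring_1 \<Rightarrow> 'F::field) list"
  assumes sym: "twisted_antipalindromic (diff_op_coeff K) s f"
    and pair: "\<And>v. X v * X' (v + of_int (s + 1)) * f v = f (v + 1)"
    and f_nz: "\<And>v. f v \<noteq> 0" and X_nz: "\<And>v. X v \<noteq> 0"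
  shows "twisted_antipalindromic (diff_op_coeff (X # K @ [X'])) (s + 1) (\<lambda>v. X v * f v)"
  unfolding twisted_antipalindromic_def
proof (intro allI)
  fix t :: int and u :: 'a
  let ?c = "diff_op_coeff K"
  define w where "w = u + of_int (t - (s + 1))"
  have c_sym: "?c j v = - (f v / f v') * ?c j' v'" if "v' = v + of_int (j - s)" "j' = 2 * s - j" for j j' v v'
    using sym that unfolding twisted_antipalindromic_def by blast
  have c1: "?c (2 * (s + 1) - t) w = - (f w / f (u + 1)) * ?c (t - 2) (u + 1)"
    by (rule c_sym) (simp_all add: w_def)
  have c2: "?c (2 * (s + 1) - t - 1) w = - (f w / f u) * ?c (t - 1) u"
    by (rule c_sym) (simp_all add: w_def)
  have c3: "?c (2 * (s + 1) - t - 1) (w + 1) = - (f (w + 1) / f (u + 1)) * ?c (t - 1) (u + 1)"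
    by (rule c_sym) (simp_all add: w_def)
  have c4: "?c (2 * (s + 1) - t - 2) (w + 1) = - (f (w + 1) / f u) * ?c t u"
    by (rule c_sym) (simp_all add: w_def)
  have pair_w: "f (w + 1) = X w * X' (u + of_int t) * f w"
    using pair[of w] by (simp add: w_def)
  have pair_u: "f (u + 1) = X u * X' (u + of_int (s + 1)) * f u"
    using pair[of u] by simp
  have X'_nz: "X' (u + of_int (s + 1)) \<noteq> 0"
    using f_nz[of "u + 1"] pair_u by auto
  have shift: "w + of_int (2 * (s + 1) - t) = u + of_int (s + 1)"
    unfolding w_def add.assoc of_int_add[symmetric] by simp
  show "diff_op_coeff (X # K @ [X']) t u = - (X u * f u / (X w * f w))
     * diff_op_coeff (X # K @ [X']) (2 * (s + 1) - t) w"
    unfolding diff_op_coeff_wrap shift c1 c2 c3 c4 pair_w pair_u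
    using f_nz[of u] f_nz[of w] X_nz[of u] X_nz[of w] X'_nz
    by (simp add: field_simps)
qed

lemma Q_nonzero:
  assumes "alg_indep n Q" and "1 \<le> a" and "a \<le> n"
  shows "Q a z \<noteq> 0"
proof
  assume "Q a z = 0"
  define e :: "nat \<times> complex \<Rightarrow> nat" where "e p = (if p = (a, z) then 1 else 0)" for p
  have supp: "{p. e p \<noteq> 0} = {(a, z)}"
    by (auto simp: e_def)
  have fin: "finite {p. e p \<noteq> 0}"
    unfolding supp by simp
  have support: "\<forall>p. e p \<noteq> 0 \<longrightarrow> fst p \<in> {1..n}"
    using assms(2,3) by (simp add: e_def)
  have prod: "(\<Prod>p\<in>{p. e p \<noteq> 0}. Q (fst p) (snd p) ^ e p) = 0"
    unfolding supp by (simp add: e_def \<open>Q a z = 0\<close>)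
  have "\<forall>e'\<in>{e}. (1::int) = 0"
    using assms(1) fin support prod unfolding alg_indep_def
    by (elim allE[of _ "{e}"] allE[of _ "\<lambda>_. 1"] impE) simp_all
  then show False
    by simp
qed

lemma Yf_0 [simp]: "Yf n Q 0 z = 1"
  by (simp add: Yf_def)

lemma Yf_nonzero:
  assumes "alg_indep n Q" and "a \<le> n"
  shows "Yf n Q a z \<noteq> 0"
  using Q_nonzero[OF assms(1)] assms(2) by (simp add: Yf_def)

definition Lmult :: "nat \<Rightarrow> (nat \<Rightarrow> complex \<Rightarrow> 'F::field) \<Rightarrow> nat \<Rightarrow> complex \<Rightarrow> 'F" where
  "Lmult n Q i v = xf n Q i (v + of_nat n + 1 - of_nat i)"

definition Lpart :: "nat \<Rightarrow> (nat \<Rightarrow> complex \<Rightarrow> 'F::field) \<Rightarrow> nat \<Rightarrow> (complex \<Rightarrow> 'F) list" where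
  "Lpart n Q a = map (Lmult n Q) [a + 1..<2 * n + 3 - a]"

definition Ltwist :: "nat \<Rightarrow> (nat \<Rightarrow> complex \<Rightarrow> 'F::field) \<Rightarrow> nat \<Rightarrow> complex \<Rightarrow> 'F" where
  "Ltwist n Q a v = 1 / Yf n Q a (v + of_nat n + 1 - of_nat a / 2)"

lemma Lop_eq_diff_op: "Lop n Q g = diff_op (Lpart n Q 0) g"
proof -
  have "foldr (Lfactor n Q) is g = diff_op (map (Lmult n Q) is) g" for "is"
    by (induction "is") (auto simp: diff_op_def Lfactor_def Lmult_def fun_eq_iff)
  then show ?thesis
    by (simp add: Lop_def Lpart_def)
qed

lemma length_Lpart: "length (Lpart n Q a) = 2 * n + 2 - 2 * a"
  by (simp add: Lpart_def)

lemma Lpart_unfold: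
  assumes "1 \<le> a" and "a \<le> n"
  shows "Lpart n Q (a - 1) = Lmult n Q a # Lpart n Q a @ [Lmult n Q (2 * n + 3 - a)]"
proof -
  have "[a..<Suc (2 * n + 3 - a)] = a # [a + 1..<2 * n + 3 - a] @ [2 * n + 3 - a]"
    using assms by (simp add: upt_conv_Cons)
  moreover have "2 * n + 3 - (a - 1) = Suc (2 * n + 3 - a)"
    using assms by simp
  ultimately show ?thesis
    using assms(1) by (simp add: Lpart_def)
qed

lemma Lpart_middle: "Lpart n Q n = [xmid n Q, \<lambda>v. - xmid n Q (v - 1)]"
proof -
  have indices: "[n + 1..<2 * n + 3 - n] = [n + 1, n + 2]"
    by (simp add: upt_rec)
  have low: "Lmult n Q (n + 1) = xmid n Q"
    by (simp add: Lmult_def xf_def fun_eq_iff)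
  have high: "Lmult n Q (n + 2) = (\<lambda>v. - xmid n Q (v - 1))"
    unfolding Lmult_def xf_def fun_eq_iff by (simp add: algebra_simps)
  show ?thesis
    unfolding Lpart_def indices list.map low high ..
qed

lemma Lmult_low:
  assumes "1 \<le> a" and "a \<le> n"
  shows "Lmult n Q a v = Yf n Q a (v + of_nat n + 1 - of_nat a / 2)
                           / Yf n Q (a - 1) (v + of_nat n + 1 - of_nat a / 2 + 1 / 2)"
proof -
  have "Lmult n Q a v = zf n Q a (v + of_nat n + 1 - of_nat a)"
    using assms by (simp add: Lmult_def xf_def)
  also have "\<dots> = Yf n Q a (v + of_nat n + 1 - of_nat a / 2)
                  / Yf n Q (a - 1) (v + of_nat n + 1 - of_nat a / 2 + 1 / 2)"
    unfolding zf_def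
    by (intro arg_cong2[where f = "(/)"] arg_cong[where f = "Yf n Q _"]) (simp_all add: field_simps)
  finally show ?thesis .
qed

lemma Lmult_high:
  assumes "1 \<le> a" and "a \<le> n"
  shows "Lmult n Q (2 * n + 3 - a) v = Yf n Q (a - 1) (v + of_nat a / 2 - 1 / 2)
                                       / Yf n Q a (v + of_nat a / 2)"
proof -
  have "\<not> (1 \<le> 2 * n + 3 - a \<and> 2 * n + 3 - a \<le> n)" "2 * n + 3 - a \<noteq> n + 1" "2 * n + 3 - a \<noteq> n + 2"
    "n + 3 \<le> 2 * n + 3 - a \<and> 2 * n + 3 - a \<le> 2 * n + 2" "2 * n + 3 - (2 * n + 3 - a) = a"
    using assms by auto
  then have "Lmult n Q (2 * n + 3 - a) v = zbarf n Q a (v + of_nat n + 1 - of_nat (2 * n + 3 - a))"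
    unfolding Lmult_def xf_def by simp
  also have "\<dots> = Yf n Q (a - 1) (v + of_nat a / 2 - 1 / 2) / Yf n Q a (v + of_nat a / 2)"
    unfolding zbarf_def using assms(2)
    by (intro arg_cong2[where f = "(/)"] arg_cong[where f = "Yf n Q _"])
      (simp_all add: field_simps)
  finally show ?thesis .
qed

lemma Ltwist_nonzero:
  assumes "alg_indep n Q" and "a \<le> n"
  shows "Ltwist n Q a v \<noteq> 0"
  using Yf_nonzero[OF assms] by (simp add: Ltwist_def)

lemma Lmult_nonzero:
  assumes "alg_indep n Q" and "1 \<le> a" and "a \<le> n"
  shows "Lmult n Q a v \<noteq> 0"
  using Yf_nonzero[OF assms(1)] assms(3) by (simp add: Lmult_low[OF assms(2,3)])

lemma Ltwist_pred:
  assumes "alg_indep n Q" and "1 \<le> a" and "a \<le> n"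
  shows "Ltwist n Q (a - 1) v = Lmult n Q a v * Ltwist n Q a v"
proof -
  have "Ltwist n Q (a - 1) v = 1 / Yf n Q (a - 1) (v + of_nat n + 1 - of_nat a / 2 + 1 / 2)"
    unfolding Ltwist_def using assms(2)
    by (intro arg_cong[where f = "\<lambda>x. 1 / Yf n Q (a - 1) x"]) (simp add: field_simps)
  then show ?thesis
    using Yf_nonzero[OF assms(1)] assms(3) by (simp add: Lmult_low[OF assms(2,3)] Ltwist_def)
qed

lemma Lmult_pair:
  assumes "alg_indep n Q" and "1 \<le> a" and "a \<le> n"
  shows "Lmult n Q a v * Lmult n Q (2 * n + 3 - a) (v + of_int (int (n + 1 - a) + 1)) * Ltwist n Q a v
       = Ltwist n Q a (v + 1)"
proof -
  define y where "y = v + of_nat n + 1 - of_nat a / 2"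
  have shift: "of_int (int (n + 1 - a) + 1) = (of_nat n + 2 - of_nat a :: complex)"
    using assms(3) by simp
  have high: "Lmult n Q (2 * n + 3 - a) (v + of_int (int (n + 1 - a) + 1))
      = Yf n Q (a - 1) (y + 1 / 2) / Yf n Q a (y + 1)"
    unfolding Lmult_high[OF assms(2,3)] shift y_def
    by (intro arg_cong2[where f = "(/)"] arg_cong[where f = "Yf n Q _"]) (simp_all add: field_simps)
  have low: "Lmult n Q a v = Yf n Q a y / Yf n Q (a - 1) (y + 1 / 2)"
    unfolding y_def by (rule Lmult_low[OF assms(2,3)])
  have twist: "Ltwist n Q a v = 1 / Yf n Q a y"
    unfolding Ltwist_def y_def ..
  have twist_Suc: "Ltwist n Q a (v + 1) = 1 / Yf n Q a (y + 1)"
    unfolding Ltwist_def y_def by (intro arg_cong[where f = "\<lambda>x. 1 / Yf n Q a x"]) simp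
  show ?thesis
    unfolding high low twist twist_Suc using Yf_nonzero[OF assms(1)] assms(3) by simp
qed

lemma xmid_mult_pred:
  assumes "alg_indep n Q" and "1 \<le> n"
  shows "xmid n Q v * xmid n Q (v - 1) = Ltwist n Q n v / Ltwist n Q n (v - 1)"
proof -
  define q where "q k = Q n (v + of_nat n / 2 + of_int k)" for k
  have Q_q: "Q n x = q k" if "x = v + of_nat n / 2 + of_int k" for x k
    using that by (simp add: q_def)
  have xmid: "xmid n Q v = q 0 * q 2 / (q 1)\<^sup>2" and xmid_pred: "xmid n Q (v - 1) = q (-1) * q 1 / (q 0)\<^sup>2"
    unfolding xmid_def by (intro arg_cong2[where f = "(/)"] arg_cong2[where f = "(*)"]
        arg_cong[where f = "\<lambda>x. x\<^sup>2"] Q_q; simp add: field_simps)+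
  have twist: "Ltwist n Q n v = q 2 / q 0" and twist_pred: "Ltwist n Q n (v - 1) = q 1 / q (-1)"
    unfolding Ltwist_def Yf_def dd_def using assms(2)
    by (auto intro!: arg_cong2[where f = "(/)"] Q_q simp: field_simps)
  have "q k \<noteq> 0" for k
    unfolding q_def using Q_nonzero[OF assms] by simp
  then show ?thesis
    unfolding xmid xmid_pred twist twist_pred by (simp add: field_simps power2_eq_square)
qed

lemma Lpart_middle_antipalindromic:
  assumes "alg_indep n Q" and "1 \<le> n"
  shows "twisted_antipalindromic (diff_op_coeff (Lpart n Q n)) 1 (Ltwist n Q n)"
  unfolding twisted_antipalindromic_def
proof (intro allI)
  fix j :: int and v :: complex
  have coeff: "diff_op_coeff (Lpart n Q n) k x
      = (if k = 0 then - xmid n Q x * xmid n Q (x - 1) else if k = 2 then 1 else 0)" for k x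
    by (simp add: Lpart_middle)
  have "xmid n Q (v + 1) * xmid n Q v = Ltwist n Q n (v + 1) / Ltwist n Q n v"
    using xmid_mult_pred[OF assms, of "v + 1"] by simp
  then show "diff_op_coeff (Lpart n Q n) j v = - (Ltwist n Q n v / Ltwist n Q n (v + of_int (j - 1)))
      * diff_op_coeff (Lpart n Q n) (2 * 1 - j) (v + of_int (j - 1))"
    unfolding coeff using xmid_mult_pred[OF assms, of v] Ltwist_nonzero[OF assms(1)]
    by (auto simp: field_simps)
qed

lemma Lpart_antipalindromic:
  assumes "alg_indep n Q" and "1 \<le> n" and "a \<le> n"
  shows "twisted_antipalindromic (diff_op_coeff (Lpart n Q a)) (int (n + 1 - a)) (Ltwist n Q a)"
  using assms(3)
proof (induction a rule: inc_induct)
  case base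
  then show ?case
    using Lpart_middle_antipalindromic[OF assms(1,2)] by simp
next
  case (step a)
  have a: "1 \<le> Suc a" "Suc a \<le> n"
    using step.hyps by simp_all
  have "twisted_antipalindromic (diff_op_coeff (Lpart n Q (Suc a - 1))) (int (n + 1 - Suc a) + 1)
      (\<lambda>v. Lmult n Q (Suc a) v * Ltwist n Q (Suc a) v)"
    unfolding Lpart_unfold[OF a]
    using step.IH Lmult_pair[OF assms(1) a] Ltwist_nonzero[OF assms(1) a(2)] Lmult_nonzero[OF assms(1) a]
    by (rule twisted_antipalindromic_wrap)
  moreover have "int (n + 1 - Suc a) + 1 = int (n + 1 - a)"
    using step.hyps by simp
  moreover have "(\<lambda>v. Lmult n Q (Suc a) v * Ltwist n Q (Suc a) v) = Ltwist n Q a"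
    using Ltwist_pred[OF assms(1) a] by (simp add: fun_eq_iff)
  ultimately show ?case
    by (simp only: diff_Suc_1)
qed

lemma L_coeff_antipalindromic:
  assumes "alg_indep n Q" and "1 \<le> n"
  shows "diff_op_coeff (Lpart n Q 0) j v
       = - diff_op_coeff (Lpart n Q 0) (2 * int (n + 1) - j) (v + of_int (j - int (n + 1)))"
proof -
  have "diff_op_coeff (Lpart n Q 0) j v = - (Ltwist n Q 0 v / Ltwist n Q 0 (v + of_int (j - int (n + 1))))
      * diff_op_coeff (Lpart n Q 0) (2 * int (n + 1) - j) (v + of_int (j - int (n + 1)))"
    using Lpart_antipalindromic[OF assms le0] unfolding twisted_antipalindromic_def diff_zero by blast
  then show ?thesis
    by (simp add: Ltwist_def)
qed

lemma L_coeff_0: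
  assumes "alg_indep n Q" and "1 \<le> n"
  shows "diff_op_coeff (Lpart n Q 0) 0 v = -1"
proof -
  have "diff_op_coeff (Lpart n Q 0) (2 * int (n + 1)) x = 1" for x
    using diff_op_coeff_length[of "Lpart n Q 0" x] by (simp add: length_Lpart)
  then show ?thesis
    using L_coeff_antipalindromic[OF assms, of 0 v] by simp
qed

lemma xi_am_eq_det_L_coeffs:
  assumes "a \<le> 2 * n + 2"
    and "\<And>r v. r < 2 * n + 2 \<Longrightarrow> diff_op (Lpart n Q 0) (w (r + 1)) v = 0"
  shows "xi_am w (2 * n + 2) a m u = (-1) ^ (a * m) * xi0 w (2 * n + 2) u
       * det (mat m m (\<lambda>(i, k). diff_op_coeff (Lpart n Q 0) (int a + int i - int k) (u + of_nat k)))"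
  by (rule xi_am_eq_det_coeffs) (use assms in \<open>simp_all add: length_Lpart\<close>)

lemma xi0_shift:
  fixes Q :: "nat \<Rightarrow> complex \<Rightarrow> 'F::field"
  assumes "alg_indep n Q" and "1 \<le> n"
    and sol: "\<And>r v. r < 2 * n + 2 \<Longrightarrow> diff_op (Lpart n Q 0) (w (r + 1)) v = 0"
  shows "xi0 w (2 * n + 2) (u + of_int k) = (-1) powi k * xi0 w (2 * n + 2) u"
proof -
  have step: "xi0 w (2 * n + 2) (v + 1) = - xi0 w (2 * n + 2) v" for v
  proof -
    have "xi0 w (2 * n + 2) (v + 1) = xi_am w (2 * n + 2) 0 1 v"
      unfolding xi_am_def xi0_def casorati_def
      by (intro arg_cong[where f = det] eq_matI) (auto simp: algebra_simps)
    also have "\<dots> = - xi0 w (2 * n + 2) v"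
      using xi_am_eq_det_L_coeffs[of 0 n Q w 1 v] sol
      by (simp add: L_coeff_0[OF assms(1,2)] det_single)
    finally show ?thesis .
  qed
  have nat: "xi0 w (2 * n + 2) (v + of_nat j) = (-1) ^ j * xi0 w (2 * n + 2) v" for v j
  proof (induction j)
    case (Suc j)
    have "v + of_nat (Suc j) = (v + of_nat j) + 1"
      by simp
    then show ?case
      by (simp only: step Suc.IH) simp
  qed simp
  show ?thesis
  proof (cases "0 \<le> k")
    case True
    then show ?thesis
      using nat[of u "nat k"] by (simp add: power_int_def)
  next
    case False
    then have "xi0 w (2 * n + 2) u = (-1) ^ nat (- k) * xi0 w (2 * n + 2) (u + of_int k)"
      using nat[of "u + of_int k" "nat (- k)"] by simp
    then show ?thesis
      using False by (simp add: power_int_def)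
  qed
qed

lemma xi_am_reflection:
  fixes Q :: "nat \<Rightarrow> complex \<Rightarrow> 'F::field"
  assumes "alg_indep n Q" and "1 \<le> n" and "a \<le> 2 * n + 2"
    and sol: "\<And>r v. r < 2 * n + 2 \<Longrightarrow> diff_op (Lpart n Q 0) (w (r + 1)) v = 0"
  shows "xi_am w (2 * n + 2) a m u
       = (-1) powi (int a - int (n + 1) + int m)
         * xi_am w (2 * n + 2) (2 * n + 2 - a) m (u + of_int (int a - int (n + 1)))"
proof -
  define d where "d = int a - int (n + 1)"
  define c where "c = diff_op_coeff (Lpart n Q 0)"
  define A where "A = mat m m (\<lambda>(i, k). c (int a + int i - int k) (u + of_nat k))"
  define B where "B = mat m m (\<lambda>(i, k). c (int (2 * n + 2 - a) + int i - int k) (u + of_int d + of_nat k))"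
  have "A = (-1) \<cdot>\<^sub>m transpose_mat B"
  proof (rule eq_matI)
    fix i k
    assume "i < dim_row ((-1) \<cdot>\<^sub>m transpose_mat B)" and "k < dim_col ((-1) \<cdot>\<^sub>m transpose_mat B)"
    moreover have "c (int a + int i - int k) (u + of_nat k)
        = - c (int (2 * n + 2 - a) + int k - int i) (u + of_int d + of_nat i)"
      using L_coeff_antipalindromic[OF assms(1,2), of "int a + int i - int k" "u + of_nat k"] assms(3)
      by (simp add: c_def d_def algebra_simps)
    ultimately show "A $$ (i, k) = ((-1) \<cdot>\<^sub>m transpose_mat B) $$ (i, k)"
      by (simp add: A_def B_def)
  qed (simp_all add: A_def B_def)
  then have "det A = (-1) ^ m * det B"
    by (simp add: B_def det_transpose[of _ m])
  moreover have "xi_am w (2 * n + 2) a m u = (-1) ^ (a * m) * xi0 w (2 * n + 2) u * det A"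
    unfolding A_def c_def by (rule xi_am_eq_det_L_coeffs[where w = w]) (use assms(3) sol in simp_all)
  moreover have "xi_am w (2 * n + 2) (2 * n + 2 - a) m (u + of_int d)
      = (-1) ^ ((2 * n + 2 - a) * m) * xi0 w (2 * n + 2) (u + of_int d) * det B"
    unfolding B_def c_def by (rule xi_am_eq_det_L_coeffs[where w = w]) (use sol in simp_all)
  moreover have "xi0 w (2 * n + 2) (u + of_int d) = (-1) powi d * xi0 w (2 * n + 2) u"
    using assms(1,2) sol by (rule xi0_shift)
  moreover have "even ((2 * n + 2 - a) * m) = even (a * m)"
    using assms(3) by auto
  ultimately show ?thesis
    unfolding d_def[symmetric]
    by (simp add: power_int_add power_int_minus_left minus_one_power_iff mult_ac)
qed

theorem mainTheorem9:
  fixes n :: nat and Q :: "nat \<Rightarrow> complex \<Rightarrow> 'F::field" and w :: "nat \<Rightarrow> complex \<Rightarrow> 'F"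
  assumes "n \<ge> 2"
    and "alg_indep n Q"
    and "\<forall>m\<in>{1..2 * n + 2}. \<forall>u. Lop n Q (w m) u = 0"
    and "\<forall>u. xi0 w (2 * n + 2) u \<noteq> 0"
  shows "(\<forall>a m u. 1 \<le> a \<and> a \<le> 2 * n + 1 \<and> 1 \<le> m \<longrightarrow>
            xi_am w (2 * n + 2) a m u * xi_am w (2 * n + 2) a m (u + 1)
          - xi_am w (2 * n + 2) a (m + 1) u * xi_am w (2 * n + 2) a (m - 1) (u + 1)
          - xi_am w (2 * n + 2) (a + 1) m u * xi_am w (2 * n + 2) (a - 1) m (u + 1) = 0)
       \<and> (\<forall>a m u. a \<le> 2 * n + 2 \<longrightarrow>
            xi_am w (2 * n + 2) a m u
          = (-1) powi (int a - int (2 * n + 2) div 2 + int m)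
            * xi_am w (2 * n + 2) (2 * n + 2 - a) m (u + of_int (int a - int (2 * n + 2) div 2)))"
proof -
  have sol: "diff_op (Lpart n Q 0) (w (r + 1)) v = 0" if "r < 2 * n + 2" for r v
    using assms(3) that by (simp flip: Lop_eq_diff_op)
  have half: "int (2 * n + 2) div 2 = int (n + 1)"
    by simp
  show ?thesis
    unfolding half
    apply (intro conjI allI impI)
    subgoal by (rule casorati_plucker) auto
    subgoal by (rule xi_am_reflection[OF assms(2)]) (use assms(1) sol in auto)
    done
qed

end
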